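(* Let $n\ge2$, let $\pi$ be a permutation of $\{1,\dots,n\}$ and let $T_0$ be the tagged Kuhn simplex $[0,e_{\pi(1)},e_{\pi(1)}+e_{\pi(2)},\dots,e_{\pi(1)}+\dots+e_{\pi(n)}]_n$, where $e_1,\dots,e_n$ are the unit vectors of $\mathbb R^n$. Then every simplex $T$ obtained from $T_0$ by successive applications of Maubach's bisection satisfies $\gamma(T)\le2\gamma(T_0)$.
   Context: Maubach's bisection of a tagged simplex $[v_0,\dots,v_n]_\gamma$, $\gamma\in\{1,\dots,n\}$: with $v'=(v_0+v_\gamma)/2$ and $\gamma'=\gamma-1$ if $\gamma\ge2$, $\gamma'=n$ if $\gamma=1$, the children are $[v_0,\dots,v_{\gamma-1},v',v_{\gamma+1},\dots,v_n]_{\gamma'}$ and $[v_1,\dots,v_\gamma,v',v_{\gamma+1},\dots,v_n]_{\gamma'}$. For a simplex $S$, $\gamma(S)=R(S)/r(S)$ with $R(S)$ the diameter of the smallest ball containing $S$ and $r(S)$ the diameter of the largest ball contained in $S$. *)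

theory Defs
  imports "HOL-Analysis.Analysis"
begin

text \<open>A tagged simplex \<open>[v_0,...,v_n]_g\<close> in \<open>\<real>^n\<close> (n = CARD('n)) is represented as a pair
  (list of the n+1 vertices [v_0,...,v_n], tag g) with g in {1..n}.\<close>

type_synonym 'n tsimplex = "(real ^ 'n) list \<times> nat"

definition maubach_children :: "'n::finite tsimplex \<Rightarrow> 'n tsimplex set" where
  "maubach_children T = (let vs = fst T; g = snd T; n = CARD('n);
      v' = (1/2) *\<^sub>R (vs ! 0 + vs ! g);
      g' = (if g \<ge> 2 then g - 1 else n)
    in { (take g vs @ [v'] @ drop (g+1) vs, g'),
         (take g (drop 1 vs) @ [v'] @ drop (g+1) vs, g') })"

inductive_set maubach_desc :: "'n::finite tsimplex \<Rightarrow> 'n tsimplex set" for T0 where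
  base: "T0 \<in> maubach_desc T0"
| step: "T \<in> maubach_desc T0 \<Longrightarrow> T' \<in> maubach_children T \<Longrightarrow> T' \<in> maubach_desc T0"

definition simplex_of :: "'n::finite tsimplex \<Rightarrow> (real ^ 'n) set" where
  "simplex_of T = convex hull (set (fst T))"

definition outer_diam :: "(real ^ 'n::finite) set \<Rightarrow> real" where
  "outer_diam S = Inf {2 * \<rho> | c \<rho>. S \<subseteq> cball c \<rho>}"

definition inner_diam :: "(real ^ 'n::finite) set \<Rightarrow> real" where
  "inner_diam S = Sup {2 * \<rho> | c \<rho>. \<rho> \<ge> 0 \<and> cball c \<rho> \<subseteq> S}"

definition shape_gamma :: "(real ^ 'n::finite) set \<Rightarrow> real" where
  "shape_gamma S = outer_diam S / inner_diam S"

definition kuhn_vertices :: "(nat \<Rightarrow> 'n::finite) \<Rightarrow> (real ^ 'n) list" where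
  "kuhn_vertices \<pi> = map (\<lambda>k. \<Sum>j=1..k. axis (\<pi> j) 1) [0..<CARD('n)+1]"

end

theory Submission
  imports Defs
begin

(*
  Every descendant T of T0 has a normal form: there are an apex x, a scale h > 0, a bijection
  \<sigma> from {1..n} onto the coordinates and signs s_j = +1 or -1 such that, with the signed
  Kuhn path p_k = s_1 e_(\<sigma> 1) + ... + s_k e_(\<sigma> k) and the tag \<gamma> of T, the vertices of T
  are v_i = x + h p_i for i \<le> \<gamma> and v_i = x + (h/2) p_i for i > \<gamma>.  Bisection preserves this
  form; the child not containing v_0 re-reads the path from its new apex v_1, which rotates
  \<sigma> and flips the sign of the first direction.  Hence T contains x + (h/2) conv {p_i} and lies
  in x + h conv {p_i}.  A signed permutation of coordinates is an isometry, so these two simplices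
  are similar to T0 with ratios h/2 and h.  Since R and r are monotone and scale linearly under
  similarities, \<gamma>(T) \<le> h R(T0) / ((h/2) r(T0)) = 2 \<gamma>(T0).
*)

lemma bounded_lipschitz_image:
  fixes f :: "'a::heine_borel \<Rightarrow> 'b::heine_borel"
  assumes "bounded S" "0 \<le> h" "\<And>a b. dist (f a) (f b) \<le> h * dist a b"
  shows "bounded (f ` S)"
  using assms
  by (intro bounded_uniformly_continuous_image lipschitz_on_uniformly_continuous[of h] lipschitz_onI)
     auto

lemma outer_diam_le:
  fixes S :: "(real^'n::finite) set"
  assumes "S \<noteq> {}" "S \<subseteq> cball c \<rho>"
  shows "outer_diam S \<le> 2 * \<rho>"
  unfolding outer_diam_def
proof (rule cInf_lower)
  obtain y where "y \<in> S" using assms(1) by blast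
  show "bdd_below {2 * \<rho> | c \<rho>. S \<subseteq> cball c \<rho>}"
  proof (rule bdd_belowI)
    fix t assume "t \<in> {2 * \<rho> | c \<rho>. S \<subseteq> cball c \<rho>}"
    then obtain c' \<rho>' where "t = 2 * \<rho>'" "S \<subseteq> cball c' \<rho>'" by blast
    with \<open>y \<in> S\<close> show "0 \<le> t" by (smt (verit) mem_cball subsetD zero_le_dist)
  qed
qed (use assms(2) in blast)

lemma outer_diam_greatest:
  fixes S :: "(real^'n::finite) set"
  assumes "bounded S" "\<And>c \<rho>. S \<subseteq> cball c \<rho> \<Longrightarrow> b \<le> 2 * \<rho>"
  shows "b \<le> outer_diam S"
  unfolding outer_diam_def
  using assms bounded_subset_cball by (intro cInf_greatest) blast+

lemma inner_diam_ge:
  fixes S :: "(real^'n::finite) set"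
  assumes "bounded S" "0 \<le> \<rho>" "cball c \<rho> \<subseteq> S"
  shows "2 * \<rho> \<le> inner_diam S"
  unfolding inner_diam_def
proof (rule cSup_upper)
  obtain B x0 where B: "S \<subseteq> cball x0 B" using assms(1) bounded_subset_cball by blast
  show "bdd_above {2 * \<rho> | c \<rho>. \<rho> \<ge> 0 \<and> cball c \<rho> \<subseteq> S}"
  proof (rule bdd_aboveI)
    fix t assume "t \<in> {2 * \<rho> | c \<rho>. \<rho> \<ge> 0 \<and> cball c \<rho> \<subseteq> S}"
    then obtain c' \<rho>' where "t = 2 * \<rho>'" "0 \<le> \<rho>'" "cball c' \<rho>' \<subseteq> cball x0 B"
      using B by blast
    then show "t \<le> 2 * B" by (smt (verit) cball_subset_cball_iff zero_le_dist)
  qed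
qed (use assms(2,3) in blast)

lemma inner_diam_least:
  fixes S :: "(real^'n::finite) set"
  assumes "S \<noteq> {}" "\<And>c \<rho>. 0 \<le> \<rho> \<Longrightarrow> cball c \<rho> \<subseteq> S \<Longrightarrow> 2 * \<rho> \<le> b"
  shows "inner_diam S \<le> b"
  unfolding inner_diam_def
proof (rule cSup_least)
  obtain y where "y \<in> S" using assms(1) by blast
  then have "cball y 0 \<subseteq> S" by simp
  then show "{2 * \<rho> | c \<rho>. \<rho> \<ge> 0 \<and> cball c \<rho> \<subseteq> S} \<noteq> {}" by blast
qed (use assms(2) in blast)

lemma outer_diam_nonneg:
  fixes S :: "(real^'n::finite) set"
  assumes "S \<noteq> {}" "bounded S"
  shows "0 \<le> outer_diam S"
proof (rule outer_diam_greatest[OF assms(2)])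
  fix c \<rho> assume "S \<subseteq> cball c \<rho>"
  with assms(1) show "0 \<le> 2 * \<rho>" by (smt (verit) all_not_in_conv mem_cball subsetD zero_le_dist)
qed

lemma inner_diam_nonneg:
  fixes S :: "(real^'n::finite) set"
  assumes "S \<noteq> {}" "bounded S"
  shows "0 \<le> inner_diam S"
proof -
  obtain y where "y \<in> S" using assms(1) by blast
  then show ?thesis using inner_diam_ge[OF assms(2), of 0 y] by simp
qed

lemma outer_diam_mono:
  fixes S S' :: "(real^'n::finite) set"
  assumes "S \<subseteq> S'" "S \<noteq> {}" "bounded S'"
  shows "outer_diam S \<le> outer_diam S'"
  using assms by (meson outer_diam_greatest outer_diam_le order_trans)

lemma inner_diam_mono:
  fixes S S' :: "(real^'n::finite) set"
  assumes "S \<subseteq> S'" "S \<noteq> {}" "bounded S'"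
  shows "inner_diam S \<le> inner_diam S'"
  using assms by (meson inner_diam_least inner_diam_ge order_trans)

lemma outer_diam_lipschitz_image_le:
  fixes f :: "real^'n::finite \<Rightarrow> real^'n"
  assumes "0 < h" "\<And>a b. dist (f a) (f b) \<le> h * dist a b" "S \<noteq> {}" "bounded S"
  shows "outer_diam (f ` S) \<le> h * outer_diam S"
proof -
  have "outer_diam (f ` S) / h \<le> outer_diam S"
  proof (rule outer_diam_greatest[OF assms(4)])
    fix c \<rho> assume "S \<subseteq> cball c \<rho>"
    have "dist (f c) (f y) \<le> h * \<rho>" if "y \<in> S" for y
    proof -
      have "dist c y \<le> \<rho>" using \<open>S \<subseteq> cball c \<rho>\<close> that by auto
      then show ?thesis using assms(1) assms(2)[of c y] by (smt (verit) mult_left_mono)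
    qed
    then have "f ` S \<subseteq> cball (f c) (h * \<rho>)" by auto
    then have "outer_diam (f ` S) \<le> 2 * (h * \<rho>)"
      using assms(3) by (intro outer_diam_le) auto
    then show "outer_diam (f ` S) / h \<le> 2 * \<rho>"
      using assms(1) by (simp add: divide_le_eq mult.commute mult.left_commute)
  qed
  then show ?thesis using assms(1) by (simp add: divide_le_eq mult.commute)
qed

lemma inner_diam_similarity_image_ge:
  fixes f :: "real^'n::finite \<Rightarrow> real^'n"
  assumes "0 < h" "surj f" "\<And>a b. dist (f a) (f b) = h * dist a b" "S \<noteq> {}" "bounded S"
  shows "h * inner_diam S \<le> inner_diam (f ` S)"
proof -
  have bounded: "bounded (f ` S)"
    using assms by (intro bounded_lipschitz_image[of S h]) auto
  have "inner_diam S \<le> inner_diam (f ` S) / h"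
  proof (rule inner_diam_least[OF assms(4)])
    fix c \<rho> assume "0 \<le> \<rho>" "cball c \<rho> \<subseteq> S"
    have "cball (f c) (h * \<rho>) \<subseteq> f ` cball c \<rho>"
    proof
      fix z assume z: "z \<in> cball (f c) (h * \<rho>)"
      obtain y where "z = f y" using assms(2) by (metis surjD)
      with z assms(1,3) show "z \<in> f ` cball c \<rho>" by auto
    qed
    then have "2 * (h * \<rho>) \<le> inner_diam (f ` S)"
      using \<open>cball c \<rho> \<subseteq> S\<close> \<open>0 \<le> \<rho>\<close> assms(1)
      by (intro inner_diam_ge[OF bounded]) auto
    then show "2 * \<rho> \<le> inner_diam (f ` S) / h"
      using assms(1) by (simp add: le_divide_eq mult.commute mult.left_commute)
  qed
  then show ?thesis using assms(1) by (simp add: le_divide_eq mult.commute)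
qed

lemma similarity_image_diams:
  fixes f :: "real^'n::finite \<Rightarrow> real^'n"
  assumes "0 < h" "surj f" "\<And>a b. dist (f a) (f b) = h * dist a b" "S \<noteq> {}" "bounded S"
  shows "outer_diam (f ` S) = h * outer_diam S" "inner_diam (f ` S) = h * inner_diam S"
proof -
  have "inj f" using assms(1,3) by (intro injI) (metis dist_eq_0_iff mult_eq_0_iff less_irrefl)
  define g where "g = inv f"
  have gf: "g ` f ` S = S" unfolding g_def image_image using \<open>inj f\<close> by simp
  have g_surj: "surj g" unfolding g_def using \<open>inj f\<close> by (rule inj_imp_surj_inv)
  have g_dist: "dist (g a) (g b) = (1/h) * dist a b" for a b
    using assms(1) assms(3)[of "g a" "g b"] assms(2) unfolding g_def by (simp add: surj_f_inv_f)
  have fS: "f ` S \<noteq> {}" "bounded (f ` S)"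
    using assms by (auto intro!: bounded_lipschitz_image[of S h])
  have "outer_diam (f ` S) \<le> h * outer_diam S"
    using assms by (intro outer_diam_lipschitz_image_le) auto
  moreover have "outer_diam S \<le> (1/h) * outer_diam (f ` S)"
    using outer_diam_lipschitz_image_le[of "1/h" g "f ` S"] assms(1) g_dist fS gf by simp
  ultimately show "outer_diam (f ` S) = h * outer_diam S"
    using assms(1) by (simp add: field_simps)
  have "h * inner_diam S \<le> inner_diam (f ` S)"
    using assms by (intro inner_diam_similarity_image_ge) auto
  moreover have "(1/h) * inner_diam (f ` S) \<le> inner_diam S"
    using inner_diam_similarity_image_ge[of "1/h" g "f ` S"] assms(1) g_surj g_dist fS gf by simp
  ultimately show "inner_diam (f ` S) = h * inner_diam S"
    using assms(1) by (simp add: field_simps)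
qed

lemma shape_gamma_between_similar_copies:
  fixes S S0 :: "(real^'n::finite) set"
  assumes f: "0 < a" "surj f" "\<And>u v. dist (f u) (f v) = a * dist u v"
    and g: "0 < b" "surj g" "\<And>u v. dist (g u) (g v) = b * dist u v"
    and between: "f ` S0 \<subseteq> S" "S \<subseteq> g ` S0"
    and S0: "S0 \<noteq> {}" "bounded S0"
  shows "shape_gamma S \<le> (b / a) * shape_gamma S0"
proof -
  have gS0: "g ` S0 \<noteq> {}" "bounded (g ` S0)"
    using S0 g by (auto intro!: bounded_lipschitz_image[of S0 b])
  have S: "S \<noteq> {}" "bounded S" using between S0 gS0 bounded_subset by blast+
  have R: "outer_diam S \<le> b * outer_diam S0"
    using outer_diam_mono[OF between(2) S(1) gS0(2)] similarity_image_diams[OF g S0] by simp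
  have r: "a * inner_diam S0 \<le> inner_diam S" "inner_diam S \<le> b * inner_diam S0"
    using inner_diam_mono[OF between(1)] inner_diam_mono[OF between(2) S(1) gS0(2)]
      similarity_image_diams[OF f S0] similarity_image_diams[OF g S0] S S0 by auto
  have "0 \<le> outer_diam S" using outer_diam_nonneg[OF S] .
  show ?thesis
  proof (cases "inner_diam S0 = 0")
    case True
    \<comment> \<open>then \<open>inner_diam S = 0\<close> too, and both ratios are \<open>0\<close> because \<open>x / 0 = 0\<close>\<close>
    then show ?thesis using r by (simp add: shape_gamma_def)
  next
    case False
    then have "0 < a * inner_diam S0"
      using inner_diam_nonneg[OF S0] f(1) by simp
    then have "outer_diam S / inner_diam S \<le> (b * outer_diam S0) / (a * inner_diam S0)"
      using R r \<open>0 \<le> outer_diam S\<close> by (intro frac_le) auto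
    then show ?thesis using f(1) by (simp add: shape_gamma_def)
  qed
qed

definition kuhn_path :: "(nat \<Rightarrow> 'n::finite) \<Rightarrow> (nat \<Rightarrow> real) \<Rightarrow> nat \<Rightarrow> real^'n" where
  "kuhn_path \<sigma> s k = (\<Sum>j=1..k. s j *\<^sub>R axis (\<sigma> j) 1)"

lemma kuhn_path_0 [simp]: "kuhn_path \<sigma> s 0 = 0"
  by (simp add: kuhn_path_def)

lemma kuhn_path_Suc [simp]:
  "kuhn_path \<sigma> s (Suc k) = kuhn_path \<sigma> s k + s (Suc k) *\<^sub>R axis (\<sigma> (Suc k)) 1"
  by (simp add: kuhn_path_def)

definition scaled_kuhn_vertices ::
    "real^'n::finite \<Rightarrow> (nat \<Rightarrow> real) \<Rightarrow> (nat \<Rightarrow> 'n) \<Rightarrow> (nat \<Rightarrow> real) \<Rightarrow> (real^'n) list" where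
  "scaled_kuhn_vertices x c \<sigma> s = map (\<lambda>i. x + c i *\<^sub>R kuhn_path \<sigma> s i) [0..<CARD('n)+1]"

lemma kuhn_vertices_eq_scaled: "kuhn_vertices \<pi> = scaled_kuhn_vertices 0 (\<lambda>_. 1) \<pi> (\<lambda>_. 1)"
  by (simp add: kuhn_vertices_def scaled_kuhn_vertices_def kuhn_path_def)

lemma length_scaled_kuhn_vertices [simp]:
  "length (scaled_kuhn_vertices x c \<sigma> s) = CARD('n) + 1"
  for x :: "real^'n::finite"
  by (simp add: scaled_kuhn_vertices_def)

lemma nth_scaled_kuhn_vertices [simp]:
  "i \<le> CARD('n) \<Longrightarrow> scaled_kuhn_vertices x c \<sigma> s ! i = x + c i *\<^sub>R kuhn_path \<sigma> s i"
  for x :: "real^'n::finite"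
  by (simp add: scaled_kuhn_vertices_def del: upt_Suc)

lemma set_scaled_kuhn_vertices:
  "set (scaled_kuhn_vertices x c \<sigma> s) = (\<lambda>i. x + c i *\<^sub>R kuhn_path \<sigma> s i) ` {0..CARD('n)}"
  for x :: "real^'n::finite"
  by (simp add: scaled_kuhn_vertices_def atLeastLessThanSuc_atLeastAtMost del: upt_Suc)

lemma scaled_kuhn_vertices_cong:
  fixes x :: "real^'n::finite"
  assumes "\<And>i. 1 \<le> i \<Longrightarrow> i \<le> CARD('n) \<Longrightarrow> c i = c' i"
  shows "scaled_kuhn_vertices x c \<sigma> s = scaled_kuhn_vertices x c' \<sigma> s"
  unfolding scaled_kuhn_vertices_def
proof (rule map_cong[OF refl])
  fix i assume "i \<in> set [0..<CARD('n)+1]"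
  then have "i \<le> CARD('n)" by (simp del: upt_Suc)
  then show "x + c i *\<^sub>R kuhn_path \<sigma> s i = x + c' i *\<^sub>R kuhn_path \<sigma> s i"
    using assms by (cases i) auto
qed

lemma convex_hull_scaled_rays_subset:
  fixes p :: "'i \<Rightarrow> 'a::real_vector"
  assumes x: "x \<in> convex hull ((\<lambda>i. x + b i *\<^sub>R p i) ` I)"
    and ab: "\<And>i. i \<in> I \<Longrightarrow> 0 \<le> a i \<and> a i \<le> b i"
  shows "convex hull ((\<lambda>i. x + a i *\<^sub>R p i) ` I) \<subseteq> convex hull ((\<lambda>i. x + b i *\<^sub>R p i) ` I)"
proof -
  have "x + a i *\<^sub>R p i \<in> convex hull ((\<lambda>i. x + b i *\<^sub>R p i) ` I)" if "i \<in> I" for i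
  proof -
    have "closed_segment x (x + b i *\<^sub>R p i) \<subseteq> convex hull ((\<lambda>i. x + b i *\<^sub>R p i) ` I)"
      using \<open>i \<in> I\<close> by (intro closed_segment_subset_convex_hull x hull_inc) auto
    moreover have "x + a i *\<^sub>R p i \<in> closed_segment x (x + b i *\<^sub>R p i)"
    proof (cases "b i = 0")
      case True
      then show ?thesis using ab[OF \<open>i \<in> I\<close>] by simp
    next
      case False
      then have "x + a i *\<^sub>R p i = (1 - a i / b i) *\<^sub>R x + (a i / b i) *\<^sub>R (x + b i *\<^sub>R p i)"
        by (simp add: algebra_simps)
      moreover have "0 \<le> a i / b i" "a i / b i \<le> 1"
        using ab[OF \<open>i \<in> I\<close>] \<open>b i \<noteq> 0\<close> by (auto simp: divide_le_eq_1)
      ultimately show ?thesis unfolding in_segment by blast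
    qed
    ultimately show ?thesis by blast
  qed
  then show ?thesis by (intro hull_minimal convex_convex_hull) auto
qed

lemma convex_hull_scaled_kuhn_vertices_mono:
  fixes x :: "real^'n::finite"
  assumes "\<And>i. i \<le> CARD('n) \<Longrightarrow> 0 \<le> a i \<and> a i \<le> b i"
  shows "convex hull set (scaled_kuhn_vertices x a \<sigma> s) \<subseteq> convex hull set (scaled_kuhn_vertices x b \<sigma> s)"
  unfolding set_scaled_kuhn_vertices
proof (rule convex_hull_scaled_rays_subset)
  have "x \<in> (\<lambda>i. x + b i *\<^sub>R kuhn_path \<sigma> s i) ` {0..CARD('n)}"
    by (rule image_eqI[of _ _ 0]) auto
  then show "x \<in> convex hull ((\<lambda>i. x + b i *\<^sub>R kuhn_path \<sigma> s i) ` {0..CARD('n)})"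
    by (rule hull_inc)
qed (use assms in auto)

lemma orthogonal_transformation_signed_permutation:
  fixes p :: "'n::finite \<Rightarrow> 'n" and t :: "'n \<Rightarrow> real"
  assumes "bij p" "\<And>k. \<bar>t k\<bar> = 1"
  shows "orthogonal_transformation (\<lambda>y :: real^'n. \<chi> k. t k * y $ p k)"
  unfolding orthogonal_transformation
proof
  show "linear (\<lambda>y. \<chi> k. t k * y $ p k)"
    unfolding linear_iff by (simp add: vec_eq_iff algebra_simps)
  have tt: "t k * (t k * r) = r" for k r
    using abs_mult_self_eq[of "t k"] assms(2)[of k] by (simp flip: mult.assoc)
  have "(\<chi> k. t k * y $ p k) \<bullet> (\<chi> k. t k * y $ p k) = y \<bullet> y" for y
    using sum.reindex_bij_betw[OF assms(1), of "\<lambda>k. y $ k * y $ k"]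
    by (simp add: inner_vec_def algebra_simps tt)
  then show "\<forall>y. norm (\<chi> k. t k * y $ p k) = norm y" by (simp add: norm_eq_sqrt_inner)
qed

lemma scaled_kuhn_simplex_similar:
  fixes \<pi> \<sigma> :: "nat \<Rightarrow> 'n::finite"
  assumes \<pi>: "bij_betw \<pi> {1..CARD('n)} UNIV" and \<sigma>: "bij_betw \<sigma> {1..CARD('n)} UNIV"
    and s: "\<forall>j. \<bar>s j\<bar> = 1" and h: "0 < h"
  obtains f where "surj f" "\<And>a b. dist (f a) (f b) = h * dist a b"
    "convex hull set (scaled_kuhn_vertices x (\<lambda>_. h) \<sigma> s) = f ` simplex_of (kuhn_vertices \<pi>, CARD('n))"
proof -
  define \<tau> where "\<tau> = inv_into {1..CARD('n)} \<sigma>"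
  have \<tau>: "bij_betw \<tau> UNIV {1..CARD('n)}" unfolding \<tau>_def using \<sigma> by (rule bij_betw_inv_into)
  define L :: "real^'n \<Rightarrow> real^'n" where "L y = (\<chi> k. s (\<tau> k) * y $ \<pi> (\<tau> k))" for y
  have "orthogonal_transformation L"
    unfolding L_def using bij_betw_trans[OF \<tau> \<pi>] s
    by (intro orthogonal_transformation_signed_permutation) (simp_all add: o_def)
  then have L: "linear L" "\<And>y. norm (L y) = norm y" "surj L"
    by (simp_all add: orthogonal_transformation orthogonal_transformation_surj)
  have L_axis: "L (axis (\<pi> j) 1) = s j *\<^sub>R axis (\<sigma> j) 1" if "j \<in> {1..CARD('n)}" for j
  proof -
    have \<tau>\<sigma>: "\<tau> (\<sigma> j) = j" unfolding \<tau>_def using \<sigma> that by (simp add: bij_betw_inv_into_left)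
    have "\<pi> (\<tau> k) = \<pi> j \<longleftrightarrow> \<tau> k = j" for k
      using \<pi> \<tau> that unfolding bij_betw_def inj_on_def by blast
    also have "\<tau> k = j \<longleftrightarrow> k = \<sigma> j" for k
      using \<tau>\<sigma> bij_betw_inv_into_right[OF \<sigma>, of k] unfolding \<tau>_def by auto
    finally have "\<pi> (\<tau> k) = \<pi> j \<longleftrightarrow> k = \<sigma> j" for k .
    with \<tau>\<sigma>
    show ?thesis unfolding L_def by (auto simp: vec_eq_iff axis_def)
  qed
  have L_path: "L (kuhn_path \<pi> (\<lambda>_. 1) k) = kuhn_path \<sigma> s k" if "k \<le> CARD('n)" for k
    using that by (simp add: kuhn_path_def linear_sum[OF L(1)] L_axis)
  define f where "f y = x + h *\<^sub>R L y" for y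
  have "surj f"
    unfolding surj_def
  proof
    fix z
    obtain y where y: "L y = (1/h) *\<^sub>R (z - x)" using L(3) by (metis surjD)
    have "f y = z" using h unfolding f_def y by simp
    then show "\<exists>y. z = f y" by metis
  qed
  moreover have "dist (f a) (f b) = h * dist a b" for a b
    using h L(2)[of "a - b"] by (simp add: f_def dist_norm linear_diff[OF L(1)] flip: scaleR_diff_right)
  moreover have "f ` (convex hull V) = convex hull (f ` V)" for V
  proof -
    have "f ` (convex hull V) = (\<lambda>v. x + h *\<^sub>R v) ` (L ` (convex hull V))"
      by (simp add: f_def image_image)
    also have "\<dots> = convex hull ((\<lambda>v. x + h *\<^sub>R v) ` (L ` V))"
      by (simp add: convex_hull_linear_image[OF L(1)] convex_hull_affinity)
    finally show ?thesis by (simp add: f_def image_image)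
  qed
  moreover have "f ` set (kuhn_vertices \<pi>) = set (scaled_kuhn_vertices x (\<lambda>_. h) \<sigma> s)"
    unfolding kuhn_vertices_eq_scaled set_scaled_kuhn_vertices image_image f_def
    by (intro image_cong) (auto simp: L_path)
  ultimately show ?thesis using that by (simp add: simplex_of_def)
qed

(* The Kuhn path of the child that drops v_0, read from its apex v_1: it runs through the
   directions \<sigma> 2, ..., \<sigma> g and then back along \<sigma> 1. *)
definition rotate_prefix :: "nat \<Rightarrow> nat \<Rightarrow> nat" where
  "rotate_prefix g j = (if j < g then j + 1 else if j = g then 1 else j)"

definition rotate_signs :: "nat \<Rightarrow> (nat \<Rightarrow> real) \<Rightarrow> nat \<Rightarrow> real" where
  "rotate_signs g s j = (if j = g then - s 1 else s (rotate_prefix g j))"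

lemma bij_betw_rotate_prefix:
  assumes "1 \<le> g" "g \<le> n"
  shows "bij_betw (rotate_prefix g) {1..n} {1..n}"
  by (rule bij_betw_byWitness[where f' = "\<lambda>j. if j = 1 then g else if j \<le> g then j - 1 else j"])
     (use assms in \<open>auto simp: rotate_prefix_def\<close>)

lemma kuhn_path_rotate_prefix_less:
  assumes "i < g"
  shows "kuhn_path (\<sigma> \<circ> rotate_prefix g) (rotate_signs g s) i
           = kuhn_path \<sigma> s (Suc i) - s 1 *\<^sub>R axis (\<sigma> 1) 1"
  using assms by (induction i) (auto simp: rotate_prefix_def rotate_signs_def)

lemma kuhn_path_rotate_prefix_ge:
  assumes "1 \<le> g" "g \<le> i"
  shows "kuhn_path (\<sigma> \<circ> rotate_prefix g) (rotate_signs g s) i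
           = kuhn_path \<sigma> s i - (2 * s 1) *\<^sub>R axis (\<sigma> 1) 1"
  using assms(2)
proof (induction i)
  case 0
  then show ?case using assms(1) by simp
next
  case (Suc i)
  let ?e = "axis (\<sigma> 1) (1::real)"
  have "kuhn_path (\<sigma> \<circ> rotate_prefix g) (rotate_signs g s) (Suc i)
          = kuhn_path (\<sigma> \<circ> rotate_prefix g) (rotate_signs g s) i
            + rotate_signs g s (Suc i) *\<^sub>R axis (\<sigma> (rotate_prefix g (Suc i))) 1"
    by simp
  also have "\<dots> = kuhn_path \<sigma> s (Suc i) - (2 * s 1) *\<^sub>R ?e"
  proof (cases "Suc i = g")
    case True
    then have "kuhn_path (\<sigma> \<circ> rotate_prefix g) (rotate_signs g s) i = kuhn_path \<sigma> s (Suc i) - s 1 *\<^sub>R ?e"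
      by (intro kuhn_path_rotate_prefix_less) simp
    moreover have "rotate_prefix g (Suc i) = 1" "rotate_signs g s (Suc i) = - s 1"
      using True by (simp_all add: rotate_prefix_def rotate_signs_def)
    ultimately show ?thesis by (simp add: vec_eq_iff algebra_simps)
  next
    case False
    then have "rotate_prefix g (Suc i) = Suc i" "rotate_signs g s (Suc i) = s (Suc i)"
      using Suc.prems by (simp_all add: rotate_prefix_def rotate_signs_def)
    moreover have "kuhn_path (\<sigma> \<circ> rotate_prefix g) (rotate_signs g s) i = kuhn_path \<sigma> s i - (2 * s 1) *\<^sub>R ?e"
      using False Suc.prems by (intro Suc.IH) simp
    ultimately show ?thesis by (simp add: algebra_simps)
  qed
  finally show ?case .
qed

definition kuhn_form ::
    "'n::finite tsimplex \<Rightarrow> real^'n \<Rightarrow> real \<Rightarrow> (nat \<Rightarrow> 'n) \<Rightarrow> (nat \<Rightarrow> real) \<Rightarrow> bool" where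
  "kuhn_form T x h \<sigma> s \<longleftrightarrow> 0 < h \<and> bij_betw \<sigma> {1..CARD('n)} UNIV \<and> (\<forall>j. \<bar>s j\<bar> = 1) \<and>
     snd T \<in> {1..CARD('n)} \<and>
     fst T = scaled_kuhn_vertices x (\<lambda>i. if i \<le> snd T then h else h/2) \<sigma> s"

lemma kuhn_form_kuhn_vertices:
  fixes \<pi> :: "nat \<Rightarrow> 'n::finite"
  assumes "bij_betw \<pi> {1..CARD('n)} UNIV"
  shows "kuhn_form (kuhn_vertices \<pi>, CARD('n)) 0 1 \<pi> (\<lambda>_. 1)"
  unfolding kuhn_form_def kuhn_vertices_eq_scaled
  using assms by (auto simp: Suc_le_eq intro: scaled_kuhn_vertices_cong)

lemma nth_take_drop_Suc_append:
  assumes "g < length vs" "i < length vs"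
  shows "(take g (drop 1 vs) @ [v] @ drop (g+1) vs) ! i
           = (if i < g then vs ! Suc i else if i = g then v else vs ! i)"
  using assms by (auto simp: nth_append min_def)

lemma first_child_vertices:
  fixes x :: "real^'n::finite"
  assumes "1 \<le> \<gamma>" "\<gamma> \<le> CARD('n)"
    and vs: "vs = scaled_kuhn_vertices x (\<lambda>i. if i \<le> \<gamma> then h else h/2) \<sigma> s"
  shows "take \<gamma> vs @ [(1/2) *\<^sub>R (vs ! 0 + vs ! \<gamma>)] @ drop (\<gamma>+1) vs
           = scaled_kuhn_vertices x (\<lambda>i. if i < \<gamma> then h else h/2) \<sigma> s"
proof -
  have len: "\<gamma> < length vs" using assms by simp
  have mid: "(1/2) *\<^sub>R (vs ! 0 + vs ! \<gamma>) = x + (h/2) *\<^sub>R kuhn_path \<sigma> s \<gamma>"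
    using assms by (simp add: scaleR_add_right)
  have "take \<gamma> vs @ [(1/2) *\<^sub>R (vs ! 0 + vs ! \<gamma>)] @ drop (\<gamma>+1) vs
          = vs[\<gamma> := x + (h/2) *\<^sub>R kuhn_path \<sigma> s \<gamma>]"
    using len by (simp add: upd_conv_take_nth_drop mid)
  also have "\<dots> = scaled_kuhn_vertices x (\<lambda>i. if i < \<gamma> then h else h/2) \<sigma> s"
    by (rule nth_equalityI) (use assms in \<open>auto simp: nth_list_update\<close>)
  finally show ?thesis .
qed

lemma second_child_vertices:
  fixes x :: "real^'n::finite"
  assumes "1 \<le> \<gamma>" "\<gamma> \<le> CARD('n)"
    and vs: "vs = scaled_kuhn_vertices x (\<lambda>i. if i \<le> \<gamma> then h else h/2) \<sigma> s"
  shows "take \<gamma> (drop 1 vs) @ [(1/2) *\<^sub>R (vs ! 0 + vs ! \<gamma>)] @ drop (\<gamma>+1) vs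
           = scaled_kuhn_vertices (x + (h * s 1) *\<^sub>R axis (\<sigma> 1) 1) (\<lambda>i. if i < \<gamma> then h else h/2)
               (\<sigma> \<circ> rotate_prefix \<gamma>) (rotate_signs \<gamma> s)"
    (is "?vs' = scaled_kuhn_vertices ?x' ?c (\<sigma> \<circ> rotate_prefix \<gamma>) (rotate_signs \<gamma> s)")
proof (rule nth_equalityI)
  fix i assume "i < length ?vs'"
  then have i: "i \<le> CARD('n)" using assms by simp
  have len: "\<gamma> < length vs" "i < length vs" using assms i by simp_all
  have mid: "(1/2) *\<^sub>R (vs ! 0 + vs ! \<gamma>) = x + (h/2) *\<^sub>R kuhn_path \<sigma> s \<gamma>"
    using assms by (simp add: scaleR_add_right)
  have "?vs' ! i = (if i < \<gamma> then vs ! Suc i else if i = \<gamma> then x + (h/2) *\<^sub>R kuhn_path \<sigma> s \<gamma> else vs ! i)"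
    unfolding nth_take_drop_Suc_append[OF len] mid ..
  also have "\<dots> = ?x' + ?c i *\<^sub>R kuhn_path (\<sigma> \<circ> rotate_prefix \<gamma>) (rotate_signs \<gamma> s) i"
  proof (cases "i < \<gamma>")
    case True
    then show ?thesis
      using assms by (simp add: kuhn_path_rotate_prefix_less algebra_simps)
  next
    case False
    then show ?thesis
      using assms i by (simp add: kuhn_path_rotate_prefix_ge algebra_simps)
  qed
  finally show "?vs' ! i = scaled_kuhn_vertices ?x' ?c (\<sigma> \<circ> rotate_prefix \<gamma>) (rotate_signs \<gamma> s) ! i"
    using i by simp
qed (use assms in simp)

lemma kuhn_form_child:
  fixes T :: "'n::finite tsimplex"
  assumes "kuhn_form T x h \<sigma> s" "T' \<in> maubach_children T"
  shows "\<exists>x' h' \<sigma>' s'. kuhn_form T' x' h' \<sigma>' s'"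
proof -
  obtain vs \<gamma> where T: "T = (vs, \<gamma>)" by fastforce
  have h: "0 < h" and \<sigma>: "bij_betw \<sigma> {1..CARD('n)} UNIV" and s: "\<forall>j. \<bar>s j\<bar> = 1"
    and \<gamma>: "1 \<le> \<gamma>" "\<gamma> \<le> CARD('n)"
    and vs: "vs = scaled_kuhn_vertices x (\<lambda>i. if i \<le> \<gamma> then h else h/2) \<sigma> s"
    using assms(1) unfolding kuhn_form_def T by auto
  define \<gamma>' where "\<gamma>' = (if 2 \<le> \<gamma> then \<gamma> - 1 else CARD('n))"
  define h' where "h' = (if 2 \<le> \<gamma> then h else h/2)"
  have \<gamma>': "\<gamma>' \<in> {1..CARD('n)}" and h': "0 < h'"
    using \<gamma> h unfolding \<gamma>'_def h'_def by auto
  \<comment> \<open>when \<open>\<gamma> = 1\<close> the only vertex keeping the scale \<open>h\<close> is the apex, where the path vanishes\<close>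
  have rescale: "scaled_kuhn_vertices y (\<lambda>i. if i < \<gamma> then h else h/2) \<tau> t
                   = scaled_kuhn_vertices y (\<lambda>i. if i \<le> \<gamma>' then h' else h'/2) \<tau> t"
    for y :: "real^'n" and \<tau> t
    by (rule scaled_kuhn_vertices_cong) (use \<gamma> in \<open>auto simp: \<gamma>'_def h'_def\<close>)
  let ?mid = "(1/2) *\<^sub>R (vs ! 0 + vs ! \<gamma>)"
  from assms(2) consider
      "T' = (take \<gamma> vs @ [?mid] @ drop (\<gamma>+1) vs, \<gamma>')"
    | "T' = (take \<gamma> (drop 1 vs) @ [?mid] @ drop (\<gamma>+1) vs, \<gamma>')"
    unfolding maubach_children_def T Let_def \<gamma>'_def by auto
  then show ?thesis
  proof cases
    case 1
    then have "kuhn_form T' x h' \<sigma> s"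
      using h' \<sigma> s \<gamma>' first_child_vertices[OF \<gamma> vs] rescale unfolding kuhn_form_def by simp
    then show ?thesis by blast
  next
    case 2
    have "bij_betw (\<sigma> \<circ> rotate_prefix \<gamma>) {1..CARD('n)} UNIV"
      using bij_betw_rotate_prefix[OF \<gamma>] \<sigma> by (rule bij_betw_trans)
    moreover have "\<forall>j. \<bar>rotate_signs \<gamma> s j\<bar> = 1" using s by (simp add: rotate_signs_def)
    ultimately have "kuhn_form T' (x + (h * s 1) *\<^sub>R axis (\<sigma> 1) 1) h' (\<sigma> \<circ> rotate_prefix \<gamma>) (rotate_signs \<gamma> s)"
      using 2 h' \<gamma>' second_child_vertices[OF \<gamma> vs] rescale unfolding kuhn_form_def by simp
    then show ?thesis by blast
  qed
qed

lemma kuhn_form_maubach_desc: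
  fixes \<pi> :: "nat \<Rightarrow> 'n::finite"
  assumes "bij_betw \<pi> {1..CARD('n)} UNIV" "T \<in> maubach_desc (kuhn_vertices \<pi>, CARD('n))"
  shows "\<exists>x h \<sigma> s. kuhn_form T x h \<sigma> s"
  using assms(2)
proof (induction rule: maubach_desc.induct)
  case base
  then show ?case using kuhn_form_kuhn_vertices[OF assms(1)] by blast
next
  case (step T T')
  then show ?case using kuhn_form_child by blast
qed

lemma kuhn_form_simplex_between:
  assumes "kuhn_form T x h \<sigma> s"
  shows "convex hull set (scaled_kuhn_vertices x (\<lambda>_. h/2) \<sigma> s) \<subseteq> simplex_of T"
    and "simplex_of T \<subseteq> convex hull set (scaled_kuhn_vertices x (\<lambda>_. h) \<sigma> s)"
  using assms unfolding kuhn_form_def simplex_of_def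
  by (auto intro!: convex_hull_scaled_kuhn_vertices_mono)

theorem lemmaA2:
  fixes \<pi> :: "nat \<Rightarrow> 'n::finite" and T :: "'n tsimplex"
  assumes "CARD('n) \<ge> 2"
    and "bij_betw \<pi> {1..CARD('n)} UNIV"
    and "T \<in> maubach_desc (kuhn_vertices \<pi>, CARD('n))"
  shows "shape_gamma (simplex_of T) \<le> 2 * shape_gamma (simplex_of (kuhn_vertices \<pi>, CARD('n)))"
proof -
  let ?S0 = "simplex_of (kuhn_vertices \<pi>, CARD('n))"
  obtain x h \<sigma> s where T: "kuhn_form T x h \<sigma> s"
    using kuhn_form_maubach_desc[OF assms(2,3)] by blast
  then have h: "0 < h" and \<sigma>: "bij_betw \<sigma> {1..CARD('n)} UNIV" and s: "\<forall>j. \<bar>s j\<bar> = 1"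
    unfolding kuhn_form_def by auto
  obtain f where f: "surj f" "\<And>a b. dist (f a) (f b) = h/2 * dist a b"
    "convex hull set (scaled_kuhn_vertices x (\<lambda>_. h/2) \<sigma> s) = f ` ?S0"
    using scaled_kuhn_simplex_similar[OF assms(2) \<sigma> s, where h = "h/2"] h by auto
  obtain g where g: "surj g" "\<And>a b. dist (g a) (g b) = h * dist a b"
    "convex hull set (scaled_kuhn_vertices x (\<lambda>_. h) \<sigma> s) = g ` ?S0"
    using scaled_kuhn_simplex_similar[OF assms(2) \<sigma> s h] by auto
  have "?S0 \<noteq> {}" "bounded ?S0"
    by (simp_all add: simplex_of_def kuhn_vertices_def finite_imp_bounded_convex_hull)
  then have "shape_gamma (simplex_of T) \<le> (h / (h/2)) * shape_gamma ?S0"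
    using h f g kuhn_form_simplex_between[OF T]
    by (intro shape_gamma_between_similar_copies[of "h/2" f h g]) auto
  then show ?thesis using h by simp
qed

end
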